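(* Let $f$ be the density on $\mathbb{R}$ given, for some $k_1,k_2>0$, by $$\log f(x)=\begin{cases}-\frac{x^2}{2}-c, & -k_1\le x\le k_2,\\ k_1x+\frac{k_1^2}{2}-c, & x<-k_1,\\ -k_2x+\frac{k_2^2}{2}-c,& x>k_2,\end{cases}$$ with $c=c(k_1,k_2)$ chosen so that $\int f=1$, and let $F$ be its distribution function. For $\alpha,\beta\in(0,1)$ with $\alpha+\beta<1$ define $$\sigma^2(\alpha,\beta)=\frac{1}{(1-\alpha-\beta)^2}\int_\alpha^{1-\beta}\!\int_\alpha^{1-\beta}\frac{\min(s,t)-st}{f(F^{-1}(s))f(F^{-1}(t))}\,ds\,dt.$$ Then $\sigma^2(\alpha,\beta)$ is strictly convex in a neighborhood of $(\alpha,\beta)=(F(-k_1),\,1-F(k_2))$. *)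

theory Defs
  imports "HOL-Analysis.Analysis"
begin

text \<open>Unnormalised log-density (Huber-type, asymmetric): the paper's log f without the constant c.\<close>
definition logf0 :: "real \<Rightarrow> real \<Rightarrow> real \<Rightarrow> real" where
  "logf0 k1 k2 x =
     (if x < - k1 then k1 * x + k1^2 / 2
      else if x > k2 then - k2 * x + k2^2 / 2
      else - (x^2) / 2)"

definition cnorm :: "real \<Rightarrow> real \<Rightarrow> real" where
  "cnorm k1 k2 = (THE c. ((\<lambda>x. exp (logf0 k1 k2 x - c)) has_integral 1) UNIV)"

definition dens :: "real \<Rightarrow> real \<Rightarrow> real \<Rightarrow> real" where
  "dens k1 k2 x = exp (logf0 k1 k2 x - cnorm k1 k2)"

definition cdf :: "real \<Rightarrow> real \<Rightarrow> real \<Rightarrow> real" where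
  "cdf k1 k2 x = integral {..x} (dens k1 k2)"

text \<open>Quantile function F^{-1} (generalised inverse; F is a bijection onto (0,1) here).\<close>
definition qf :: "real \<Rightarrow> real \<Rightarrow> real \<Rightarrow> real" where
  "qf k1 k2 s = Inf {x. s \<le> cdf k1 k2 x}"

definition sigma2 :: "real \<Rightarrow> real \<Rightarrow> real \<Rightarrow> real \<Rightarrow> real" where
  "sigma2 k1 k2 a b =
     1 / (1 - a - b)^2 *
     integral {a..1-b} (\<lambda>t. integral {a..1-b} (\<lambda>s.
        (min s t - s * t) / (dens k1 k2 (qf k1 k2 s) * dens k1 k2 (qf k1 k2 t))))"

definition strict_convex_on :: "'a::real_vector set \<Rightarrow> ('a \<Rightarrow> real) \<Rightarrow> bool" where
  "strict_convex_on S g \<longleftrightarrow> convex S \<and>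
    (\<forall>x\<in>S. \<forall>y\<in>S. x \<noteq> y \<longrightarrow> (\<forall>u. 0 < u \<and> u < 1 \<longrightarrow>
       g (u *\<^sub>R x + (1 - u) *\<^sub>R y) < u * g x + (1 - u) * g y))"

end

theory Submission
  imports Defs
begin

text \<open>Write c = 1 - beta and let qdens = 1 / (f o F^-1) be the quantile density. Splitting the kernel
  min(s,t) - s t at s = t expresses the double integral V(a, c) of (min(s,t) - s t) qdens(s) qdens(t)
  over [a, c]^2 through primitives of s qdens(s), (1 - s) qdens(s) and one more function, so
  sigma^2 = V / (c - a)^2 has explicit first and second derivatives along every line.
  At the point (a, c) = (F(-k1), F(k2)) the quantile function runs through the normal part of f,
  where all these quantities are explicit: the determinant of the Hessian is a positive multiple of
  the strict Cauchy-Schwarz inequality (int f)(int x^2 f) > (int x f)^2 on [-k1, k2], and its value in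
  the direction (1, 1) is positive, so the Hessian is positive definite. By continuity it stays
  positive definite on a ball around that point, and a positive second derivative along every
  segment of the ball gives strict convexity.\<close>

section \<open>Derivatives and integrals of real functions\<close>

lemma has_real_derivative_max0_power2:
  "((\<lambda>t::real. (max 0 t)^2) has_real_derivative 2 * max 0 t) (at t)"
proof -
  consider "t < 0" | "t = 0" | "t > 0" by linarith
  then show ?thesis
  proof cases
    case 1
    have "((\<lambda>t::real. 0) has_real_derivative 2 * max 0 t) (at t)" using 1 by simp
    then show ?thesis
      by (rule has_field_derivative_transform_within_open[where S="{..<0}"]) (use 1 in auto)
  next
    case 2
    have "((\<lambda>h::real. max 0 h) \<longlongrightarrow> 0) (at 0)"
      using tendsto_max[OF tendsto_const tendsto_ident_at, of 0 0 UNIV] by simp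
    moreover have "\<forall>\<^sub>F h in at (0::real). max 0 h = ((max 0 h)^2 - (max 0 0)^2) / (h - 0)"
      by (auto simp: eventually_at_filter max_def power2_eq_square)
    ultimately show ?thesis
      using 2 by (simp add: has_field_derivative_iff tendsto_cong)
  next
    case 3
    have "((\<lambda>t::real. t^2) has_real_derivative 2 * max 0 t) (at t)"
      using 3 by (auto intro!: derivative_eq_intros)
    then show ?thesis
      by (rule has_field_derivative_transform_within_open[where S="{0<..}"]) (use 3 in auto)
  qed
qed

lemma has_real_derivative_max0_power2_chain:
  assumes "(g has_real_derivative g') (at x)" and "D = 2 * max 0 (g x) * g'"
  shows "((\<lambda>x. (max 0 (g x))^2) has_real_derivative D) (at x)"
  using DERIV_chain2[OF has_real_derivative_max0_power2 assms(1)] assms(2) by simp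

lemma has_real_derivative_divide_power:
  fixes N D :: "real \<Rightarrow> real"
  assumes "(N has_real_derivative N') (at t)" "(D has_real_derivative D') (at t)" "D t \<noteq> 0"
  shows "((\<lambda>t. N t / D t ^ n) has_real_derivative N' / D t ^ n - real n * N t * D' / D t ^ Suc n) (at t)"
proof -
  have "real n * D t ^ (n - 1) = real n * D t ^ n / D t"
    using assms(3) by (cases n) auto
  then show ?thesis
    using assms by (auto intro!: derivative_eq_intros simp: field_simps)
qed

lemma has_integral_real_derivative:
  fixes G g :: "real \<Rightarrow> real"
  assumes "a \<le> b" and "\<And>x. x \<in> {a..b} \<Longrightarrow> (G has_real_derivative g x) (at x)"
  shows "(g has_integral G b - G a) {a..b}"
  using assms
  by (intro fundamental_theorem_of_calculus)
     (auto simp: has_real_derivative_iff_has_vector_derivative[symmetric] intro: has_field_derivative_at_within)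

lemma has_real_derivative_same_increment:
  fixes \<phi> \<psi> d :: "real \<Rightarrow> real"
  assumes "a \<le> b"
    and "\<And>x. x \<in> {a..b} \<Longrightarrow> (\<phi> has_real_derivative d x) (at x)"
    and "\<And>x. x \<in> {a..b} \<Longrightarrow> (\<psi> has_real_derivative d x) (at x)"
  shows "\<phi> b - \<phi> a = \<psi> b - \<psi> a"
  using has_integral_unique has_integral_real_derivative[OF assms(1,2)]
    has_integral_real_derivative[OF assms(1,3)] by blast

lemma integral_has_real_derivative_interior:
  fixes h :: "real \<Rightarrow> real"
  assumes "continuous_on {a..b} h" and "a < t" "t < b"
  shows "((\<lambda>x. integral {a..x} h) has_real_derivative h t) (at t)"
proof -
  have "((\<lambda>x. integral {a..x} h) has_real_derivative h t) (at t within {a..b})"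
    using assms by (intro integral_has_real_derivative) auto
  moreover have "t \<in> interior {a..b}" using assms by simp
  ultimately show ?thesis by (metis at_within_interior)
qed

lemma has_integral_exp_to_minus_infinity:
  fixes a c :: real
  assumes "a > 0"
  shows "((\<lambda>x. exp (a * x)) has_integral exp (a * c) / a) {..c}"
proof -
  have reflected: "((\<lambda>y. exp (- a * y)) has_integral exp (a * c) / a) {-c..}"
    using has_integral_exp_minus_to_infinity[of a "-c"] assms by simp
  then have "(\<lambda>y. exp (- a * y)) absolutely_integrable_on {-c..}"
    by (intro nonnegative_absolutely_integrable_1) (auto simp: has_integral_integrable)
  moreover have "uminus ` {..c} \<subseteq> {-c..}" "uminus ` {-c..} \<subseteq> {..c}" by auto
  ultimately have "(\<lambda>x. exp (- a * - x)) absolutely_integrable_on {..c}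
      \<and> integral {..c} (\<lambda>x. exp (- a * - x)) = exp (a * c) / a"
    using has_absolute_integral_reflect_real[of "{..c}" "{-c..}" "\<lambda>y. exp (- a * y)"]
      integral_unique[OF reflected] by auto
  then show ?thesis
    by (simp add: absolutely_integrable_on_def has_integral_iff)
qed

lemma has_integral_pos_if_continuous:
  fixes g :: "real \<Rightarrow> real"
  assumes "(g has_integral i) {a..b}" "a < b" "continuous_on {a..b} g"
    and "\<And>x. x \<in> {a..b} \<Longrightarrow> g x \<ge> 0" and "x \<in> {a..b}" "g x \<noteq> 0"
  shows "i > 0"
proof -
  have "i \<ge> 0" using assms(1,4) by (rule has_integral_nonneg)
  moreover have "i \<noteq> 0"
    using integral_eq_0_iff[OF assms(3,2,4)] integral_unique[OF assms(1)] assms(5,6) by blast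
  ultimately show ?thesis by simp
qed

lemma moments_strict_Cauchy_Schwarz:
  fixes f :: "real \<Rightarrow> real"
  assumes ab: "a < b" and cont: "continuous_on {a..b} f" and pos: "\<And>x. x \<in> {a..b} \<Longrightarrow> f x > 0"
    and m0: "(f has_integral m0) {a..b}"
    and m1: "((\<lambda>x. x * f x) has_integral m1) {a..b}"
    and m2: "((\<lambda>x. x^2 * f x) has_integral m2) {a..b}"
  shows "m1^2 < m0 * m2"
proof -
  have nonneg: "\<And>x. x \<in> {a..b} \<Longrightarrow> f x \<ge> 0" using pos by (simp add: less_imp_le)
  have "m0 > 0"
    using has_integral_pos_if_continuous[OF m0 ab cont nonneg, of b] pos[of b] ab by simp
  define \<mu> where "\<mu> = m1 / m0"
  have "((\<lambda>x. x^2 * f x - 2 * \<mu> * (x * f x) + \<mu>^2 * f x) has_integral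
      m2 - 2 * \<mu> * m1 + \<mu>^2 * m0) {a..b}"
    by (intro has_integral_add has_integral_diff has_integral_mult_right m0 m1 m2)
  then have var: "((\<lambda>x. (x - \<mu>)^2 * f x) has_integral (m0 * m2 - m1^2) / m0) {a..b}"
    using \<open>m0 > 0\<close>
    by (simp add: \<mu>_def power2_eq_square algebra_simps add_divide_distrib diff_divide_distrib)
  obtain x where "x \<in> {a..b}" "x \<noteq> \<mu>"
    using ab by (cases "\<mu> = a") (auto intro: that[of a] that[of b])
  then have "(m0 * m2 - m1^2) / m0 > 0"
    using pos[of x] nonneg by (intro has_integral_pos_if_continuous[OF var ab, of x])
      (auto intro!: continuous_intros cont)
  with \<open>m0 > 0\<close> show ?thesis by (simp add: zero_less_divide_iff)
qed

lemma eventually_nhds_pos_if_isCont: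
  fixes g :: "'a::t2_space \<Rightarrow> real"
  assumes "isCont g x" "g x > 0"
  shows "\<forall>\<^sub>F p in nhds x. g p > 0"
  using order_tendstoD(1)[OF assms(1)[unfolded isCont_def] assms(2)] assms(2)
  by (simp add: eventually_nhds_conv_at)

section \<open>Binary quadratic forms and strict convexity\<close>

lemma quadratic_form_pos:
  fixes p q r x y :: real
  assumes "p > 0" "p * r - q^2 > 0" "x \<noteq> 0 \<or> y \<noteq> 0"
  shows "p * x^2 + 2 * q * x * y + r * y^2 > 0"
proof -
  have "p * (p * x^2 + 2 * q * x * y + r * y^2) = (p * x + q * y)^2 + (p * r - q^2) * y^2"
    by (simp add: power2_eq_square algebra_simps)
  also have "\<dots> > 0"
    using assms by (cases "y = 0") (auto intro: add_nonneg_pos)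
  finally show ?thesis using \<open>p > 0\<close> by (simp add: zero_less_mult_iff)
qed

lemma quadratic_form_pos_def_if_pos_value:
  fixes p q r x y :: real
  assumes "p * r - q^2 > 0" "p * x^2 + 2 * q * x * y + r * y^2 > 0"
  shows "p > 0"
proof (rule ccontr)
  assume "\<not> p > 0"
  moreover have "p \<noteq> 0" using assms(1) by auto
  ultimately have "p * (p * x^2 + 2 * q * x * y + r * y^2) < 0"
    using assms(2) by (simp add: mult_neg_pos)
  moreover have "p * (p * x^2 + 2 * q * x * y + r * y^2) = (p * x + q * y)^2 + (p * r - q^2) * y^2"
    by (simp add: power2_eq_square algebra_simps)
  moreover have "(p * x + q * y)^2 + (p * r - q^2) * y^2 \<ge> 0" using assms(1) by simp
  ultimately show False by linarith
qed

lemma second_derivative_pos_imp_strict_convex_combination: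
  fixes g g' g'' :: "real \<Rightarrow> real"
  assumes d1: "\<And>t. t \<in> {0..1} \<Longrightarrow> (g has_real_derivative g' t) (at t)"
    and d2: "\<And>t. t \<in> {0..1} \<Longrightarrow> (g' has_real_derivative g'' t) (at t)"
    and pos: "\<And>t. t \<in> {0..1} \<Longrightarrow> g'' t > 0"
    and u: "0 < u" "u < 1"
  shows "g u < u * g 1 + (1 - u) * g 0"
proof -
  obtain z1 where z1: "0 < z1" "z1 < u" "g u - g 0 = u * g' z1"
    using MVT2[of 0 u g g'] d1 u by auto
  obtain z2 where z2: "u < z2" "z2 < 1" "g 1 - g u = (1 - u) * g' z2"
    using MVT2[of u 1 g g'] d1 u by auto
  obtain z3 where z3: "z1 < z3" "z3 < z2" "g' z2 - g' z1 = (z2 - z1) * g'' z3"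
    using MVT2[of z1 z2 g' g''] d2 z1 z2 by auto
  have "(z2 - z1) * g'' z3 > 0" using pos[of z3] z1 z2 z3 by simp
  then have "g' z1 < g' z2" using z3(3) by simp
  then have "(1 - u) * (g u - g 0) < u * (g 1 - g u)"
    unfolding z1(3) z2(3) using u by simp
  then show ?thesis by (simp add: algebra_simps)
qed

lemma strict_convex_onI_second_derivative:
  fixes g :: "'a::real_vector \<Rightarrow> real"
  assumes "convex S"
    and "\<And>x y. x \<in> S \<Longrightarrow> y \<in> S \<Longrightarrow> x \<noteq> y \<Longrightarrow> \<exists>G G' G''.
          (\<forall>t\<in>{0..1}. G t = g (t *\<^sub>R x + (1 - t) *\<^sub>R y))
        \<and> (\<forall>t\<in>{0..1}. (G has_real_derivative G' t) (at t))
        \<and> (\<forall>t\<in>{0..1}. (G' has_real_derivative G'' t) (at t)) \<and> (\<forall>t\<in>{0..1}. G'' t > 0)"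
  shows "strict_convex_on S g"
  unfolding strict_convex_on_def
proof (intro conjI assms(1) ballI impI allI)
  fix x y and u :: real assume xy: "x \<in> S" "y \<in> S" "x \<noteq> y" and u: "0 < u \<and> u < 1"
  obtain G G' G'' where "\<forall>t\<in>{0..1}. G t = g (t *\<^sub>R x + (1 - t) *\<^sub>R y)"
    "\<forall>t\<in>{0..1}. (G has_real_derivative G' t) (at t)"
    "\<forall>t\<in>{0..1}. (G' has_real_derivative G'' t) (at t)" "\<forall>t\<in>{0..1}. G'' t > 0"
    using assms(2)[OF xy] by blast
  then show "g (u *\<^sub>R x + (1 - u) *\<^sub>R y) < u * g x + (1 - u) * g y"
    using second_derivative_pos_imp_strict_convex_combination[of G G' G'' u] u by simp
qed

section \<open>The density and its quantile function\<close>

locale huber_density =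
  fixes k1 k2 :: real
  assumes k1_pos: "k1 > 0" and k2_pos: "k2 > 0"
begin

abbreviation "f \<equiv> dens k1 k2"
abbreviation "F \<equiv> cdf k1 k2"
abbreviation "Q \<equiv> qf k1 k2"

definition dlogf :: "real \<Rightarrow> real" where
  "dlogf x = k1 - max 0 (x + k1) + max 0 (x - k2)"

lemma dlogf_middle: "-k1 \<le> x \<Longrightarrow> x \<le> k2 \<Longrightarrow> dlogf x = -x"
  by (simp add: dlogf_def max_def)

lemma has_real_derivative_logf0: "(logf0 k1 k2 has_real_derivative dlogf x) (at x)"
proof -
  have "logf0 k1 k2 = (\<lambda>x. k1 * x + k1^2/2 - (max 0 (x + k1))^2 / 2 + (max 0 (x - k2))^2 / 2)"
    using k1_pos k2_pos by (auto simp: fun_eq_iff logf0_def max_def power2_eq_square field_simps)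
  then show ?thesis
    unfolding dlogf_def
    by (auto intro!: derivative_eq_intros has_real_derivative_max0_power2_chain)
qed

lemma has_integral_left_tail:
  assumes "c \<le> -k1"
  shows "((\<lambda>x. exp (logf0 k1 k2 x - C)) has_integral exp (logf0 k1 k2 c - C) / k1) {..c}"
proof -
  have tail: "exp (logf0 k1 k2 x - C) = exp (k1^2/2 - C) * exp (k1 * x)" if "x \<le> c" for x
    using that assms k1_pos k2_pos by (cases "x = -k1") (auto simp: logf0_def power2_eq_square exp_add[symmetric])
  have "((\<lambda>x. exp (k1^2/2 - C) * exp (k1 * x)) has_integral exp (k1^2/2 - C) * (exp (k1 * c) / k1)) {..c}"
    using has_integral_exp_to_minus_infinity[OF k1_pos] by (rule has_integral_mult_right)
  then have "((\<lambda>x. exp (logf0 k1 k2 x - C)) has_integral exp (k1^2/2 - C) * (exp (k1 * c) / k1)) {..c}"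
    by (rule has_integral_eq[rotated]) (simp add: tail)
  then show ?thesis
    using tail[of c] by simp
qed

lemma has_integral_right_tail:
  assumes "c \<ge> k2"
  shows "((\<lambda>x. exp (logf0 k1 k2 x - C)) has_integral exp (logf0 k1 k2 c - C) / k2) {c..}"
proof -
  have tail: "exp (logf0 k1 k2 x - C) = exp (k2^2/2 - C) * exp (- k2 * x)" if "x \<ge> c" for x
    using that assms k1_pos k2_pos by (cases "x = k2") (auto simp: logf0_def power2_eq_square exp_add[symmetric])
  have "((\<lambda>x. exp (k2^2/2 - C) * exp (- k2 * x)) has_integral exp (k2^2/2 - C) * (exp (- k2 * c) / k2)) {c..}"
    using has_integral_exp_minus_to_infinity[OF k2_pos] by (rule has_integral_mult_right)
  then have "((\<lambda>x. exp (logf0 k1 k2 x - C)) has_integral exp (k2^2/2 - C) * (exp (- k2 * c) / k2)) {c..}"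
    by (rule has_integral_eq[rotated]) (simp add: tail)
  then show ?thesis
    using tail[of c] by simp
qed

lemma continuous_on_logf0: "continuous_on S (logf0 k1 k2)"
  using has_real_derivative_logf0 by (meson DERIV_isCont continuous_at_imp_continuous_on)

lemma has_integral_exp_logf0:
  "((\<lambda>x. exp (logf0 k1 k2 x - C)) has_integral
     exp (logf0 k1 k2 (-k1) - C) / k1 + integral {-k1..k2} (\<lambda>x. exp (logf0 k1 k2 x - C))
       + exp (logf0 k1 k2 k2 - C) / k2) UNIV"
proof -
  have middle: "((\<lambda>x. exp (logf0 k1 k2 x - C)) has_integral
      integral {-k1..k2} (\<lambda>x. exp (logf0 k1 k2 x - C))) {-k1..k2}"
    by (intro integrable_integral integrable_continuous_interval continuous_intros continuous_on_logf0)
  have "((\<lambda>x. exp (logf0 k1 k2 x - C)) has_integral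
      exp (logf0 k1 k2 (-k1) - C) / k1 + integral {-k1..k2} (\<lambda>x. exp (logf0 k1 k2 x - C)))
      ({..-k1} \<union> {-k1..k2})"
    by (intro has_integral_Un has_integral_left_tail middle
          negligible_subset[OF negligible_sing[of "-k1"]]) auto
  then have "((\<lambda>x. exp (logf0 k1 k2 x - C)) has_integral
      exp (logf0 k1 k2 (-k1) - C) / k1 + integral {-k1..k2} (\<lambda>x. exp (logf0 k1 k2 x - C))
        + exp (logf0 k1 k2 k2 - C) / k2) (({..-k1} \<union> {-k1..k2}) \<union> {k2..})"
    by (rule has_integral_Un[OF _ has_integral_right_tail])
       (use k1_pos k2_pos in \<open>auto intro: negligible_subset[OF negligible_sing[of k2]]\<close>)
  moreover have "({..-k1} \<union> {-k1..k2}) \<union> {k2..} = UNIV"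
    using k1_pos k2_pos by auto
  ultimately show ?thesis by simp
qed

definition Z :: real where
  "Z = integral UNIV (\<lambda>x. exp (logf0 k1 k2 x))"

lemma has_integral_Z: "((\<lambda>x. exp (logf0 k1 k2 x)) has_integral Z) UNIV"
  unfolding Z_def using has_integral_integrable[OF has_integral_exp_logf0[of 0]]
  by (simp add: integrable_integral)

lemma Z_pos: "Z > 0"
proof -
  have "Z = exp (logf0 k1 k2 (-k1)) / k1 + integral {-k1..k2} (\<lambda>x. exp (logf0 k1 k2 x))
      + exp (logf0 k1 k2 k2) / k2"
    unfolding Z_def using integral_unique[OF has_integral_exp_logf0[of 0]] by simp
  moreover have "integral {-k1..k2} (\<lambda>x. exp (logf0 k1 k2 x)) \<ge> 0"
    by (rule integral_nonneg) (auto intro!: integrable_continuous_interval continuous_intros continuous_on_logf0)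
  moreover have "exp (logf0 k1 k2 (-k1)) / k1 > 0" "exp (logf0 k1 k2 k2) / k2 > 0"
    using k1_pos k2_pos by simp_all
  ultimately show ?thesis by linarith
qed

lemma has_integral_exp_logf0_normalized:
  "((\<lambda>x. exp (logf0 k1 k2 x - ln Z)) has_integral 1) UNIV"
  using has_integral_mult_right[OF has_integral_Z, of "1 / Z"] Z_pos
  by (simp add: exp_diff)

lemma cnorm_eq: "cnorm k1 k2 = ln Z"
  unfolding cnorm_def
proof (rule the_equality)
  fix c assume one: "((\<lambda>x. exp (logf0 k1 k2 x - c)) has_integral 1) UNIV"
  have "((\<lambda>x. exp (logf0 k1 k2 x - c)) has_integral Z / exp c) UNIV"
    using has_integral_divide[OF has_integral_Z, of "exp c"] by (simp add: exp_diff)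
  then have "Z / exp c = 1" using has_integral_unique[OF _ one] by blast
  then have "Z = exp c" by (simp add: divide_eq_1_iff)
  then show "c = ln Z" by simp
qed (rule has_integral_exp_logf0_normalized)

lemma dens_has_integral_1: "(f has_integral 1) UNIV"
  using has_integral_exp_logf0_normalized by (simp add: dens_def[abs_def] cnorm_eq)

lemma dens_pos: "f x > 0"
  by (simp add: dens_def)

lemma has_real_derivative_dens: "(f has_real_derivative f x * dlogf x) (at x)"
  unfolding dens_def[abs_def] by (auto intro!: derivative_eq_intros has_real_derivative_logf0)

lemma continuous_on_dens: "continuous_on S f"
  using has_real_derivative_dens by (meson DERIV_isCont continuous_at_imp_continuous_on)

lemma dens_left_tail: "c \<le> -k1 \<Longrightarrow> (f has_integral f c / k1) {..c}"
  unfolding dens_def[abs_def] by (rule has_integral_left_tail)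

lemma dens_right_tail: "c \<ge> k2 \<Longrightarrow> (f has_integral f c / k2) {c..}"
  unfolding dens_def[abs_def] by (rule has_integral_right_tail)

lemma has_integral_dens_interval: "(f has_integral integral {a..b} f) {a..b}"
  by (intro integrable_integral integrable_continuous_interval continuous_on_dens)

lemma has_integral_cdf: "(f has_integral F x) {..x}"
proof -
  have "f integrable_on {..x}"
  proof (cases "x \<le> -k1")
    case True
    then show ?thesis using dens_left_tail by blast
  next
    case False
    then have "{..x} = {..-k1} \<union> {-k1..x}" by auto
    moreover have "(f has_integral f (-k1) / k1 + integral {-k1..x} f) ({..-k1} \<union> {-k1..x})"
      by (intro has_integral_Un dens_left_tail has_integral_dens_interval
            negligible_subset[OF negligible_sing[of "-k1"]]) auto
    ultimately show ?thesis by auto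
  qed
  then show ?thesis unfolding cdf_def by (rule integrable_integral)
qed

lemma cdf_add_integral:
  assumes "x \<le> y"
  shows "F y = F x + integral {x..y} f"
proof -
  have "(f has_integral F x + integral {x..y} f) ({..x} \<union> {x..y})"
    by (intro has_integral_Un has_integral_cdf has_integral_dens_interval
          negligible_subset[OF negligible_sing[of x]]) auto
  moreover have "{..x} \<union> {x..y} = {..y}" using assms by auto
  ultimately show ?thesis using has_integral_cdf[of y] has_integral_unique by metis
qed

lemma cdf_strict_mono: "strict_mono F"
proof (rule strict_monoI)
  fix x y :: real assume "x < y"
  then have "integral {x..y} f > 0"
    using dens_pos[of x] by (intro has_integral_pos_if_continuous[OF has_integral_dens_interval])
      (auto intro: continuous_on_dens less_imp_le[OF dens_pos])
  then show "F x < F y" using cdf_add_integral[of x y] \<open>x < y\<close> by simp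
qed

lemma has_real_derivative_cdf: "(F has_real_derivative f x) (at x)"
proof -
  have "((\<lambda>y. F (x - 1) + integral {x - 1..y} f) has_real_derivative 0 + f x) (at x)"
    by (intro DERIV_add DERIV_const integral_has_real_derivative_interior[where b = "x + 1"]
          continuous_on_dens) auto
  then have "((\<lambda>y. F (x - 1) + integral {x - 1..y} f) has_real_derivative f x) (at x)"
    by simp
  then show ?thesis
    by (rule has_field_derivative_transform_within_open[where S="{x - 1<..}"])
       (auto simp: cdf_add_integral[symmetric])
qed

lemma cdf_at_left: "F (-k1) = f (-k1) / k1"
  unfolding cdf_def using dens_left_tail[of "-k1"] by (simp add: integral_unique)

lemma cdf_at_right: "1 - F k2 = f k2 / k2"
proof -
  have "(f has_integral F k2 + f k2 / k2) ({..k2} \<union> {k2..})"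
    by (intro has_integral_Un has_integral_cdf dens_right_tail
          negligible_subset[OF negligible_sing[of k2]]) auto
  moreover have "{..k2} \<union> {k2..} = (UNIV :: real set)" by auto
  ultimately have "F k2 + f k2 / k2 = 1"
    using has_integral_unique dens_has_integral_1 by metis
  then show ?thesis by simp
qed

lemma qf_cdf: "Q (F x) = x"
proof -
  have "{y. F x \<le> F y} = {x..}" using strict_mono_less_eq[OF cdf_strict_mono] by auto
  then show ?thesis unfolding qf_def by simp
qed

lemma cdf_qf:
  assumes "F a \<le> s" "s \<le> F b"
  shows "F (Q s) = s"
proof -
  have "a \<le> b" using assms strict_mono_less_eq[OF cdf_strict_mono] by (meson order_trans)
  then obtain x where "F x = s"
    using IVT[of F a s b] assms DERIV_isCont[OF has_real_derivative_cdf] by blast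
  then show ?thesis using qf_cdf by auto
qed

lemma has_real_derivative_qf: "(Q has_real_derivative 1 / f x) (at (F x))"
proof -
  have "(Q has_real_derivative inverse (f x)) (at (F x))"
  proof (rule DERIV_inverse_function[where a = "F (x - 1)" and b = "F (x + 1)"])
    show "(F has_real_derivative f x) (at (Q (F x)))"
      using has_real_derivative_cdf by (simp add: qf_cdf)
    show "F (x - 1) < F x" "F x < F (x + 1)"
      using strict_monoD[OF cdf_strict_mono] by auto
    show "F (Q y) = y" if "F (x - 1) < y" "y < F (x + 1)" for y
      using that by (intro cdf_qf[of "x - 1" _ "x + 1"]) auto
    show "isCont Q (F x)"
      by (rule isCont_inverse_function2[where a = "x - 1" and b = "x + 1"])
         (auto simp: qf_cdf DERIV_isCont[OF has_real_derivative_cdf])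
  qed (use dens_pos[of x] in simp)
  then show ?thesis by (simp add: divide_inverse)
qed

definition qdens :: "real \<Rightarrow> real" where
  "qdens s = 1 / f (Q s)"

definition qdens' :: "real \<Rightarrow> real" where
  "qdens' s = - dlogf (Q s) * (qdens s)^2"

text \<open>A compact window of quantile levels containing \<open>[F (-k1), F k2]\<close> in its interior; the
  primitives below are integrals from its left end.\<close>

definition s0 :: real where "s0 = F (-k1 - 1)"
definition s1 :: real where "s1 = F (k2 + 1)"

lemma window_cdfE:
  assumes "s0 \<le> s" "s \<le> s1"
  obtains x where "s = F x"
  using cdf_qf[of "-k1 - 1" s "k2 + 1"] assms unfolding s0_def s1_def by metis

lemma qdens_cdf: "qdens (F x) = 1 / f x"
  by (simp add: qdens_def qf_cdf)

lemma qdens_dens: "qdens s * f (Q s) = 1"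
  using dens_pos[of "Q s"] by (simp add: qdens_def)

lemma has_real_derivative_qf_window:
  "s0 \<le> s \<Longrightarrow> s \<le> s1 \<Longrightarrow> (Q has_real_derivative qdens s) (at s)"
  by (erule window_cdfE, assumption) (simp add: qdens_cdf has_real_derivative_qf)

lemma has_real_derivative_dens_qf:
  assumes "s0 \<le> s" "s \<le> s1"
  shows "((\<lambda>s. f (Q s)) has_real_derivative dlogf (Q s)) (at s)"
proof -
  have "f (Q s) * dlogf (Q s) * qdens s = dlogf (Q s)"
    using qdens_dens[of s] by (simp add: algebra_simps)
  then show ?thesis
    using DERIV_chain2[OF has_real_derivative_dens has_real_derivative_qf_window[OF assms]] by metis
qed

lemma has_real_derivative_qdens:
  assumes "s0 \<le> s" "s \<le> s1"
  shows "(qdens has_real_derivative qdens' s) (at s)"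
  unfolding qdens_def[abs_def] qdens'_def
  using dens_pos[of "Q s"]
  by (auto intro!: derivative_eq_intros has_real_derivative_dens_qf[OF assms]
      simp: qdens_def power2_eq_square)

lemma isCont_qf_window: "s0 \<le> s \<Longrightarrow> s \<le> s1 \<Longrightarrow> isCont Q s"
  using has_real_derivative_qf_window DERIV_isCont by blast

lemma isCont_qdens: "s0 \<le> s \<Longrightarrow> s \<le> s1 \<Longrightarrow> isCont qdens s"
  using has_real_derivative_qdens DERIV_isCont by blast

lemma isCont_qdens': 
  assumes "s0 \<le> s" "s \<le> s1"
  shows "isCont qdens' s"
proof -
  have "isCont dlogf x" for x
    unfolding dlogf_def by (intro continuous_intros)
  then show ?thesis
    unfolding qdens'_def[abs_def]
    by (intro continuous_intros isCont_o2[OF isCont_qf_window[OF assms]] isCont_qdens[OF assms])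
qed

lemma continuous_on_qdens: "continuous_on {s0..s1} qdens"
  using isCont_qdens by (intro continuous_at_imp_continuous_on) auto

section \<open>A closed form for sigma^2\<close>

definition Psi :: "real \<Rightarrow> real" where
  "Psi t = integral {s0..t} (\<lambda>s. s * qdens s)"

definition Omega :: "real \<Rightarrow> real" where
  "Omega t = integral {s0..t} (\<lambda>s. (1 - s) * qdens s)"

lemma continuous_on_Psi: "continuous_on {s0..s1} Psi"
  unfolding Psi_def[abs_def]
  by (intro indefinite_integral_continuous_1 integrable_continuous_interval continuous_intros continuous_on_qdens)

lemma continuous_on_Omega: "continuous_on {s0..s1} Omega"
  unfolding Omega_def[abs_def]
  by (intro indefinite_integral_continuous_1 integrable_continuous_interval continuous_intros continuous_on_qdens)

definition Lambda :: "real \<Rightarrow> real" where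
  "Lambda t = integral {s0..t} (\<lambda>s. qdens s * ((1 - s) * Psi s - s * Omega s))"

lemma has_real_derivative_Psi: "s0 < t \<Longrightarrow> t < s1 \<Longrightarrow> (Psi has_real_derivative t * qdens t) (at t)"
  unfolding Psi_def[abs_def]
  by (intro integral_has_real_derivative_interior[where b = s1] continuous_intros continuous_on_qdens)

lemma has_real_derivative_Omega: "s0 < t \<Longrightarrow> t < s1 \<Longrightarrow> (Omega has_real_derivative (1 - t) * qdens t) (at t)"
  unfolding Omega_def[abs_def]
  by (intro integral_has_real_derivative_interior[where b = s1] continuous_intros continuous_on_qdens)

lemma has_real_derivative_Lambda:
  "s0 < t \<Longrightarrow> t < s1 \<Longrightarrow> (Lambda has_real_derivative qdens t * ((1 - t) * Psi t - t * Omega t)) (at t)"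
  unfolding Lambda_def[abs_def]
  by (intro integral_has_real_derivative_interior[where b = s1] continuous_intros continuous_on_qdens
        continuous_on_Psi continuous_on_Omega)

lemma has_integral_kernel_inner:
  assumes "s0 < a" "a \<le> t" "t \<le> c" "c < s1"
  shows "((\<lambda>s. (min s t - s * t) / (f (Q s) * f (Q t))) has_integral
           qdens t * ((1 - t) * (Psi t - Psi a) + t * (Omega c - Omega t))) {a..c}"
proof -
  have kernel: "(min s t - s * t) / (f (Q s) * f (Q t)) = (min s t - s * t) * qdens s * qdens t" for s
    by (simp add: qdens_def)
  have "((\<lambda>s. qdens t * (1 - t) * (s * qdens s)) has_integral
      qdens t * (1 - t) * Psi t - qdens t * (1 - t) * Psi a) {a..t}"
    using assms by (intro has_integral_real_derivative DERIV_cmult has_real_derivative_Psi) auto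
  then have left: "((\<lambda>s. (min s t - s * t) / (f (Q s) * f (Q t))) has_integral
      qdens t * (1 - t) * Psi t - qdens t * (1 - t) * Psi a) {a..t}"
    by (rule has_integral_eq[rotated]) (simp only: kernel, auto simp: min_def algebra_simps)
  have "((\<lambda>s. qdens t * t * ((1 - s) * qdens s)) has_integral
      qdens t * t * Omega c - qdens t * t * Omega t) {t..c}"
    using assms by (intro has_integral_real_derivative DERIV_cmult has_real_derivative_Omega) auto
  then have right: "((\<lambda>s. (min s t - s * t) / (f (Q s) * f (Q t))) has_integral
      qdens t * t * Omega c - qdens t * t * Omega t) {t..c}"
    by (rule has_integral_eq[rotated]) (simp only: kernel, auto simp: min_def algebra_simps)
  show ?thesis
    using has_integral_combine[OF assms(2,3) left right] by (simp add: algebra_simps)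
qed

definition V :: "real \<Rightarrow> real \<Rightarrow> real" where
  "V a c = Lambda c - Lambda a - Psi a * (Omega c - Omega a) + Omega c * (Psi c - Psi a)"

lemma has_integral_kernel:
  assumes "s0 < a" "a \<le> c" "c < s1"
  shows "((\<lambda>t. integral {a..c} (\<lambda>s. (min s t - s * t) / (f (Q s) * f (Q t)))) has_integral V a c)
           {a..c}"
proof -
  have "((\<lambda>t. qdens t * ((1 - t) * (Psi t - Psi a) + t * (Omega c - Omega t))) has_integral
      (Lambda c - Psi a * Omega c + Omega c * Psi c) - (Lambda a - Psi a * Omega a + Omega c * Psi a)) {a..c}"
  proof (rule has_integral_real_derivative)
    fix t assume "t \<in> {a..c}"
    then have "s0 < t" "t < s1" using assms by auto
    then show "((\<lambda>t. Lambda t - Psi a * Omega t + Omega c * Psi t) has_real_derivative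
        qdens t * ((1 - t) * (Psi t - Psi a) + t * (Omega c - Omega t))) (at t)"
      by (auto intro!: derivative_eq_intros has_real_derivative_Lambda has_real_derivative_Omega
            has_real_derivative_Psi simp: algebra_simps)
  qed fact
  then have "((\<lambda>t. qdens t * ((1 - t) * (Psi t - Psi a) + t * (Omega c - Omega t))) has_integral V a c)
      {a..c}"
    by (simp add: V_def algebra_simps)
  then show ?thesis
    by (rule has_integral_eq[rotated])
       (use assms in \<open>auto intro!: integral_unique[symmetric] has_integral_kernel_inner\<close>)
qed

definition sig :: "real \<Rightarrow> real \<Rightarrow> real" where
  "sig a c = V a c / (c - a)^2"

lemma sigma2_eq_sig:
  assumes "s0 < a" "a \<le> 1 - b" "1 - b < s1"
  shows "sigma2 k1 k2 a b = sig a (1 - b)"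
  using integral_unique[OF has_integral_kernel[OF assms]]
  by (simp add: sigma2_def sig_def algebra_simps)

section \<open>Derivatives of sigma^2 along lines\<close>

lemma has_real_derivative_window_chain:
  assumes "(B has_real_derivative B') (at t)" "s0 < B t" "B t < s1"
  shows "((\<lambda>t. Psi (B t)) has_real_derivative B t * qdens (B t) * B') (at t)"
    and "((\<lambda>t. Omega (B t)) has_real_derivative (1 - B t) * qdens (B t) * B') (at t)"
    and "((\<lambda>t. Lambda (B t)) has_real_derivative
           qdens (B t) * ((1 - B t) * Psi (B t) - B t * Omega (B t)) * B') (at t)"
    and "((\<lambda>t. qdens (B t)) has_real_derivative qdens' (B t) * B') (at t)"
  using assms
  by (auto intro!: DERIV_chain2[OF _ assms(1)] has_real_derivative_Psi has_real_derivative_Omega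
        has_real_derivative_Lambda has_real_derivative_qdens)

definition V_a :: "real \<Rightarrow> real \<Rightarrow> real" where
  "V_a a c = -2 * a * qdens a * (Omega c - Omega a)"
definition V_c :: "real \<Rightarrow> real \<Rightarrow> real" where
  "V_c a c = 2 * (1 - c) * qdens c * (Psi c - Psi a)"
definition V_aa :: "real \<Rightarrow> real \<Rightarrow> real" where
  "V_aa a c = -2 * (qdens a + a * qdens' a) * (Omega c - Omega a) + 2 * a * (1 - a) * (qdens a)^2"
definition V_ac :: "real \<Rightarrow> real \<Rightarrow> real" where
  "V_ac a c = -2 * a * qdens a * (1 - c) * qdens c"
definition V_cc :: "real \<Rightarrow> real \<Rightarrow> real" where
  "V_cc a c = -2 * (qdens c - (1 - c) * qdens' c) * (Psi c - Psi a) + 2 * (1 - c) * c * (qdens c)^2"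

lemma has_real_derivative_V_along:
  assumes A: "(A has_real_derivative A') (at t)" "s0 < A t" "A t < s1"
    and B: "(B has_real_derivative B') (at t)" "s0 < B t" "B t < s1"
  shows "((\<lambda>t. V (A t) (B t)) has_real_derivative V_a (A t) (B t) * A' + V_c (A t) (B t) * B') (at t)"
    and "((\<lambda>t. V_a (A t) (B t)) has_real_derivative V_aa (A t) (B t) * A' + V_ac (A t) (B t) * B') (at t)"
    and "((\<lambda>t. V_c (A t) (B t)) has_real_derivative V_ac (A t) (B t) * A' + V_cc (A t) (B t) * B') (at t)"
  unfolding V_def V_a_def V_c_def V_aa_def V_ac_def V_cc_def
  by (auto intro!: derivative_eq_intros A(1) B(1)
        has_real_derivative_window_chain[OF A] has_real_derivative_window_chain[OF B]
      simp: algebra_simps power2_eq_square)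

definition sig_dir :: "real \<Rightarrow> real \<Rightarrow> real \<Rightarrow> real \<Rightarrow> real" where
  "sig_dir a c da dc = (V_a a c * da + V_c a c * dc) / (c - a)^2 - 2 * V a c * (dc - da) / (c - a)^3"

text \<open>The entries of \<open>(c - a)^4\<close> times the Hessian of \<open>sig\<close> in the variables \<open>(a, c)\<close>.\<close>

definition H_aa :: "real \<Rightarrow> real \<Rightarrow> real" where
  "H_aa a c = (c - a)^2 * V_aa a c + 4 * (c - a) * V_a a c + 6 * V a c"
definition H_ac :: "real \<Rightarrow> real \<Rightarrow> real" where
  "H_ac a c = (c - a)^2 * V_ac a c - 2 * (c - a) * V_a a c + 2 * (c - a) * V_c a c - 6 * V a c"
definition H_cc :: "real \<Rightarrow> real \<Rightarrow> real" where
  "H_cc a c = (c - a)^2 * V_cc a c - 4 * (c - a) * V_c a c + 6 * V a c"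

lemma has_real_derivative_sig_along:
  assumes A: "\<And>t. (A has_real_derivative da) (at t)" and B: "\<And>t. (B has_real_derivative dc) (at t)"
    and window: "s0 < A t" "A t < B t" "B t < s1"
  shows "((\<lambda>t. sig (A t) (B t)) has_real_derivative sig_dir (A t) (B t) da dc) (at t)"
    and "((\<lambda>t. sig_dir (A t) (B t) da dc) has_real_derivative
          (H_aa (A t) (B t) * da^2 + 2 * H_ac (A t) (B t) * da * dc + H_cc (A t) (B t) * dc^2)
            / (B t - A t)^4) (at t)"
proof -
  have D: "B t - A t \<noteq> 0" using window by simp
  have "s0 < A t" "A t < s1" "s0 < B t" "B t < s1" using window by auto
  note V = has_real_derivative_V_along[OF A this(1,2) B this(3,4)]
  have gap: "((\<lambda>t. B t - A t) has_real_derivative dc - da) (at t)"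
    by (intro DERIV_diff A B)
  show "((\<lambda>t. sig (A t) (B t)) has_real_derivative sig_dir (A t) (B t) da dc) (at t)"
    using has_real_derivative_divide_power[OF V(1) gap D, of 2]
    by (simp add: sig_def[abs_def] sig_dir_def)
  have N1: "((\<lambda>t. V_a (A t) (B t) * da + V_c (A t) (B t) * dc) has_real_derivative
      (V_aa (A t) (B t) * da + V_ac (A t) (B t) * dc) * da
        + (V_ac (A t) (B t) * da + V_cc (A t) (B t) * dc) * dc) (at t)"
    by (intro DERIV_add DERIV_cmult_right V(2,3))
  have N2: "((\<lambda>t. 2 * V (A t) (B t) * (dc - da)) has_real_derivative
      2 * (V_a (A t) (B t) * da + V_c (A t) (B t) * dc) * (dc - da)) (at t)"
    by (intro DERIV_cmult_right DERIV_cmult V(1))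
  have common_denominator:
    "P / d^2 - real 2 * N * e / d ^ Suc 2 - (2 * N * e / d^3 - real 3 * (2 * W * e) * e / d ^ Suc 3)
      = (d^2 * P - 4 * d * N * e + 6 * W * e^2) / d^4" if "d \<noteq> 0" for d P N e W :: real
    using that by (simp add: field_simps eval_nat_numeral)
  have numerator: "(B t - A t)^2 * ((V_aa (A t) (B t) * da + V_ac (A t) (B t) * dc) * da
        + (V_ac (A t) (B t) * da + V_cc (A t) (B t) * dc) * dc)
      - 4 * (B t - A t) * (V_a (A t) (B t) * da + V_c (A t) (B t) * dc) * (dc - da)
      + 6 * V (A t) (B t) * (dc - da)^2
      = H_aa (A t) (B t) * da^2 + 2 * H_ac (A t) (B t) * da * dc + H_cc (A t) (B t) * dc^2"
    by (simp add: H_aa_def H_ac_def H_cc_def power2_eq_square algebra_simps)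
  show "((\<lambda>t. sig_dir (A t) (B t) da dc) has_real_derivative
          (H_aa (A t) (B t) * da^2 + 2 * H_ac (A t) (B t) * da * dc + H_cc (A t) (B t) * dc^2)
            / (B t - A t)^4) (at t)"
    unfolding sig_dir_def
    by (rule DERIV_cong[OF DERIV_diff[OF has_real_derivative_divide_power[OF N1 gap D, of 2]
          has_real_derivative_divide_power[OF N2 gap D, of 3]]])
       (subst common_denominator[OF D], simp only: numerator)
qed

section \<open>The Hessian at the point (F(-k1), 1 - F(k2))\<close>

definition a0 :: real where "a0 = F (-k1)"
definition c0 :: real where "c0 = F k2"

lemma dens_left_a0: "f (-k1) = k1 * a0"
  using cdf_at_left k1_pos by (simp add: a0_def)

lemma dens_right_c0: "f k2 = k2 * (1 - c0)"
  using cdf_at_right k2_pos by (simp add: c0_def)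

lemma a0_pos: "a0 > 0"
  using dens_left_a0 dens_pos[of "-k1"] k1_pos by (simp add: zero_less_mult_iff)

lemma c0_less_1: "c0 < 1"
  using dens_right_c0 dens_pos[of k2] k2_pos by (simp add: zero_less_mult_iff)

lemma window_center: "s0 < a0" "a0 < c0" "c0 < s1"
  unfolding s0_def a0_def c0_def s1_def using k1_pos k2_pos
  by (auto intro: strict_monoD[OF cdf_strict_mono])

lemma qf_a0: "Q a0 = -k1" and qf_c0: "Q c0 = k2"
  by (simp_all add: a0_def c0_def qf_cdf)

lemma qf_middle:
  assumes "a0 \<le> b" "b \<le> c0"
  shows "-k1 \<le> Q b" "Q b \<le> k2"
proof -
  have "F (Q b) = b" using cdf_qf assms unfolding a0_def c0_def by blast
  then show "-k1 \<le> Q b" "Q b \<le> k2"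
    using assms strict_mono_less_eq[OF cdf_strict_mono] unfolding a0_def c0_def by metis+
qed

lemma middle_in_window: "a0 \<le> b \<Longrightarrow> b \<le> c0 \<Longrightarrow> s0 \<le> b \<and> b \<le> s1"
  using window_center by auto

text \<open>For \<open>b \<in> [a0, c0]\<close> the quantile \<open>Q b\<close> lies in the normal part of the density, where
  \<open>dlogf (Q b) = - Q b\<close>; the closed forms below are verified by differentiating in \<open>b\<close>.\<close>

lemma Psi_middle:
  assumes "a0 \<le> b" "b \<le> c0"
  shows "Psi b - Psi a0 = b * Q b + f (Q b)"
proof -
  have "Psi b - Psi a0 = (b * Q b + f (Q b)) - (a0 * Q a0 + f (Q a0))"
  proof (rule has_real_derivative_same_increment[OF assms(1)])
    fix x assume x: "x \<in> {a0..b}"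
    then show "(Psi has_real_derivative x * qdens x) (at x)"
      using assms window_center by (intro has_real_derivative_Psi) auto
    have "dlogf (Q x) = - Q x" using x assms qf_middle[of x] dlogf_middle by auto
    then show "((\<lambda>x. x * Q x + f (Q x)) has_real_derivative x * qdens x) (at x)"
      using x assms middle_in_window[of x]
      by (auto intro!: derivative_eq_intros has_real_derivative_qf_window has_real_derivative_dens_qf)
  qed
  then show ?thesis by (simp add: qf_a0 dens_left_a0)
qed

lemma Omega_middle:
  assumes "a0 \<le> b" "b \<le> c0"
  shows "Omega b - Omega a0 = Q b + k1 - (Psi b - Psi a0)"
proof -
  have "Omega b - Omega a0 = (Q b - Psi b) - (Q a0 - Psi a0)"
  proof (rule has_real_derivative_same_increment[OF assms(1)])
    fix x assume x: "x \<in> {a0..b}"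
    then show "(Omega has_real_derivative (1 - x) * qdens x) (at x)"
      using assms window_center by (intro has_real_derivative_Omega) auto
    show "((\<lambda>x. Q x - Psi x) has_real_derivative (1 - x) * qdens x) (at x)"
      using x assms window_center middle_in_window[of x]
      by (auto intro!: derivative_eq_intros has_real_derivative_qf_window has_real_derivative_Psi
          simp: algebra_simps)
  qed
  then show ?thesis by (simp add: qf_a0)
qed

lemma Psi_center: "Psi c0 - Psi a0 = k2"
  using Psi_middle[of c0] window_center qf_c0 dens_right_c0 by (simp add: algebra_simps)

lemma Omega_center: "Omega c0 - Omega a0 = k1"
  using Omega_middle[of c0] window_center qf_c0 Psi_center by simp

lemma V_middle:
  assumes "a0 \<le> b" "b \<le> c0"
  shows "V a0 b = b - a0 - Q b * f (Q b) + (Q b)^2 * (1 - b) - (Q b * (1 - b) - f (Q b))^2"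
proof -
  have "V a0 b - V a0 a0 = (b - a0 - Q b * f (Q b) + (Q b)^2 * (1 - b) - (Q b * (1 - b) - f (Q b))^2)
      - (a0 - a0 - Q a0 * f (Q a0) + (Q a0)^2 * (1 - a0) - (Q a0 * (1 - a0) - f (Q a0))^2)"
  proof (rule has_real_derivative_same_increment[OF assms(1)])
    fix x assume x: "x \<in> {a0..b}"
    then have window: "s0 < x" "x < s1" "s0 \<le> x" "x \<le> s1"
      using assms window_center by auto
    show "((\<lambda>x. V a0 x) has_real_derivative V_c a0 x) (at x)"
      using has_real_derivative_V_along(1)[of "\<lambda>_. a0" 0 x "\<lambda>x. x" 1] window window_center
      by simp
    have "dlogf (Q x) = - Q x" using x assms qf_middle[of x] dlogf_middle by auto
    moreover have "Psi x - Psi a0 = x * Q x + f (Q x)" using x assms by (intro Psi_middle) auto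
    moreover have "f (Q x) > 0" by (rule dens_pos)
    ultimately show "((\<lambda>x. x - a0 - Q x * f (Q x) + (Q x)^2 * (1 - x) - (Q x * (1 - x) - f (Q x))^2)
        has_real_derivative V_c a0 x) (at x)"
      using window
      by (auto intro!: derivative_eq_intros has_real_derivative_qf_window has_real_derivative_dens_qf
          simp: V_c_def qdens_def field_simps power2_eq_square)
  qed
  then show ?thesis
    by (simp add: V_def qf_a0 dens_left_a0 power2_eq_square algebra_simps)
qed

lemma V_center: "V a0 c0 = c0 - a0"
  using V_middle[of c0] window_center by (simp add: qf_c0 dens_right_c0 power2_eq_square algebra_simps)

lemma moments_middle:
  shows "(f has_integral c0 - a0) {-k1..k2}"
    and "((\<lambda>x. x * f x) has_integral f (-k1) - f k2) {-k1..k2}"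
    and "((\<lambda>x. x^2 * f x) has_integral (c0 - a0) - k1 * f (-k1) - k2 * f k2) {-k1..k2}"
proof -
  have le: "-k1 \<le> k2" using k1_pos k2_pos by simp
  show "(f has_integral c0 - a0) {-k1..k2}"
    using has_integral_dens_interval cdf_add_integral[OF le] by (simp add: a0_def c0_def)
  have "((\<lambda>x. x * f x) has_integral (- f k2) - (- f (-k1))) {-k1..k2}"
    using le by (intro has_integral_real_derivative)
      (auto intro!: derivative_eq_intros has_real_derivative_dens simp: dlogf_middle)
  then show "((\<lambda>x. x * f x) has_integral f (-k1) - f k2) {-k1..k2}" by simp
  have "((\<lambda>x. x^2 * f x) has_integral (F k2 - k2 * f k2) - (F (-k1) - (-k1) * f (-k1))) {-k1..k2}"
    using le by (intro has_integral_real_derivative)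
      (auto intro!: derivative_eq_intros has_real_derivative_dens has_real_derivative_cdf
        simp: dlogf_middle power2_eq_square algebra_simps)
  then show "((\<lambda>x. x^2 * f x) has_integral (c0 - a0) - k1 * f (-k1) - k2 * f k2) {-k1..k2}"
    by (simp add: a0_def c0_def algebra_simps)
qed

lemma qdens_a0: "qdens a0 = 1 / (k1 * a0)" and qdens_c0: "qdens c0 = 1 / (k2 * (1 - c0))"
  by (simp_all add: qdens_def qf_a0 qf_c0 dens_left_a0 dens_right_c0)

lemma V_derivatives_center:
  shows "V_a a0 c0 = -2" "V_c a0 c0 = 2" "V_ac a0 c0 = -2 / (k1 * k2)"
    and "V_aa a0 c0 = 2 * (1 - a0) / (k1^2 * a0)" "V_cc a0 c0 = 2 * c0 / (k2^2 * (1 - c0))"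
proof -
  define q where "q = 1 - c0"
  have q: "q > 0" using c0_less_1 by (simp add: q_def)
  have qdens_c0': "qdens c0 = 1 / (k2 * q)" by (simp add: qdens_c0 q_def)
  show "V_a a0 c0 = -2" "V_c a0 c0 = 2" "V_ac a0 c0 = -2 / (k1 * k2)"
    using k1_pos k2_pos a0_pos q
    by (simp_all add: V_a_def V_c_def V_ac_def q_def[symmetric] qdens_a0 qdens_c0' Psi_center Omega_center)
  have "qdens' a0 = - k1 * (qdens a0)^2" "qdens' c0 = k2 * (qdens c0)^2"
    using k1_pos k2_pos by (simp_all add: qdens'_def qf_a0 qf_c0 dlogf_middle)
  then have zero: "qdens a0 + a0 * qdens' a0 = 0" "qdens c0 - (1 - c0) * qdens' c0 = 0"
    using k1_pos k2_pos a0_pos q by (simp_all add: q_def[symmetric] qdens_a0 qdens_c0' power2_eq_square)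
  show "V_aa a0 c0 = 2 * (1 - a0) / (k1^2 * a0)" "V_cc a0 c0 = 2 * c0 / (k2^2 * (1 - c0))"
    unfolding V_aa_def V_cc_def zero using k1_pos k2_pos a0_pos q
    by (simp_all add: q_def[symmetric] qdens_a0 qdens_c0' power2_eq_square)
qed

lemma hessian_center_pos_def:
  shows "H_aa a0 c0 > 0" and "H_aa a0 c0 * H_cc a0 c0 - (H_ac a0 c0)^2 > 0"
proof -
  define P q D where "P = a0" and "q = 1 - c0" and "D = c0 - a0"
  have P: "P > 0" and q: "q > 0" and D: "D > 0" "D = 1 - P - q"
    using a0_pos c0_less_1 window_center by (auto simp: P_def q_def D_def)
  have CS: "(k1 * P - k2 * q)^2 < D * (D - k1^2 * P - k2^2 * q)"
    using moments_strict_Cauchy_Schwarz[OF _ continuous_on_dens dens_pos moments_middle] k1_pos k2_pos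
    by (simp add: P_def q_def D_def dens_left_a0 dens_right_c0 power2_eq_square algebra_simps)
  have H: "H_aa a0 c0 = 2 * D^2 * (1 - P) / (k1^2 * P) - 2 * D"
    "H_cc a0 c0 = 2 * D^2 * (1 - q) / (k2^2 * q) - 2 * D"
    "H_ac a0 c0 = - 2 * D^2 / (k1 * k2) + 2 * D"
    by (simp_all add: H_aa_def H_cc_def H_ac_def V_derivatives_center V_center P_def q_def D_def
        algebra_simps)
  define K where "K = k1^2 * k2^2 * P * q"
  have K: "K > 0" using k1_pos k2_pos P q by (simp add: K_def)
  have "H_aa a0 c0 * H_cc a0 c0 - (H_ac a0 c0)^2
      = 4 * D^3 * (D * (D - k1^2 * P - k2^2 * q) - (k1 * P - k2 * q)^2) / K"
    unfolding H K_def D(2) using k1_pos k2_pos P q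
    by (simp add: field_simps power2_eq_square power3_eq_cube)
  also have "\<dots> > 0" using CS D K by simp
  finally show det: "H_aa a0 c0 * H_cc a0 c0 - (H_ac a0 c0)^2 > 0" .
  have "H_aa a0 c0 * 1^2 + 2 * H_ac a0 c0 * 1 * 1 + H_cc a0 c0 * 1^2
      = 2 * D^2 * (D * (k1^2 * P + k2^2 * q) + (k1 * P - k2 * q)^2) / K"
    unfolding H K_def D(2) using k1_pos k2_pos P q
    by (simp add: field_simps power2_eq_square)
  also have "\<dots> > 0"
    using D K k1_pos k2_pos P q by (intro divide_pos_pos mult_pos_pos add_pos_nonneg) auto
  finally show "H_aa a0 c0 > 0"
    by (rule quadratic_form_pos_def_if_pos_value[OF det])
qed

section \<open>Strict convexity near (F(-k1), 1 - F(k2))\<close>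

lemma continuous_window_compose:
  assumes "continuous (at p) g" "s0 < g p" "g p < s1"
  shows "continuous (at p) (\<lambda>p. qdens (g p))" "continuous (at p) (\<lambda>p. qdens' (g p))"
    and "continuous (at p) (\<lambda>p. Psi (g p))" "continuous (at p) (\<lambda>p. Omega (g p))"
    and "continuous (at p) (\<lambda>p. Lambda (g p))"
  using assms
  by (auto intro!: isCont_o2[OF assms(1)] isCont_qdens isCont_qdens'
      DERIV_isCont[OF has_real_derivative_Psi] DERIV_isCont[OF has_real_derivative_Omega]
      DERIV_isCont[OF has_real_derivative_Lambda])

lemma isCont_hessian:
  assumes "s0 < a" "a < s1" "s0 < 1 - b" "1 - b < s1"
  shows "isCont (\<lambda>p. H_aa (fst p) (1 - snd p)) (a, b)"
    and "isCont (\<lambda>p. H_aa (fst p) (1 - snd p) * H_cc (fst p) (1 - snd p) - (H_ac (fst p) (1 - snd p))^2) (a, b)"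
proof -
  have "isCont (\<lambda>p. H_aa (fst p) (1 - snd p)) (a, b)" "isCont (\<lambda>p. H_ac (fst p) (1 - snd p)) (a, b)"
    "isCont (\<lambda>p. H_cc (fst p) (1 - snd p)) (a, b)"
    unfolding H_aa_def H_ac_def H_cc_def V_def V_a_def V_c_def V_aa_def V_ac_def V_cc_def
    using assms by (auto intro!: continuous_intros continuous_window_compose)
  then show "isCont (\<lambda>p. H_aa (fst p) (1 - snd p)) (a, b)"
    "isCont (\<lambda>p. H_aa (fst p) (1 - snd p) * H_cc (fst p) (1 - snd p) - (H_ac (fst p) (1 - snd p))^2) (a, b)"
    by (auto intro!: continuous_intros)
qed

definition hessian_pos_def :: "real \<Rightarrow> real \<Rightarrow> bool" where
  "hessian_pos_def a c \<longleftrightarrow> s0 < a \<and> a < c \<and> c < s1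
     \<and> H_aa a c > 0 \<and> H_aa a c * H_cc a c - (H_ac a c)^2 > 0"

lemma eventually_hessian_pos_def_near_center:
  "\<forall>\<^sub>F p in nhds (a0, 1 - c0). hessian_pos_def (fst p) (1 - snd p)"
proof -
  have window: "s0 < a0" "a0 < s1" "s0 < 1 - (1 - c0)" "1 - (1 - c0) < s1"
    using window_center by auto
  have "\<forall>\<^sub>F p in nhds (a0, 1 - c0). fst p - s0 > 0"
    "\<forall>\<^sub>F p in nhds (a0, 1 - c0). (1 - snd p) - fst p > 0"
    "\<forall>\<^sub>F p in nhds (a0, 1 - c0). s1 - (1 - snd p) > 0"
    by (rule eventually_nhds_pos_if_isCont; use window_center in \<open>auto intro!: continuous_intros\<close>)+
  moreover have "\<forall>\<^sub>F p in nhds (a0, 1 - c0). H_aa (fst p) (1 - snd p) > 0"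
    "\<forall>\<^sub>F p in nhds (a0, 1 - c0).
       H_aa (fst p) (1 - snd p) * H_cc (fst p) (1 - snd p) - (H_ac (fst p) (1 - snd p))^2 > 0"
    using hessian_center_pos_def
    by (intro eventually_nhds_pos_if_isCont isCont_hessian[OF window]; simp)+
  ultimately show ?thesis
    unfolding hessian_pos_def_def by eventually_elim auto
qed

lemma sigma2_strict_convex_on:
  assumes "convex S" and pos_def: "\<And>p. p \<in> S \<Longrightarrow> hessian_pos_def (fst p) (1 - snd p)"
  shows "strict_convex_on S (\<lambda>(a, b). sigma2 k1 k2 a b)"
proof (rule strict_convex_onI_second_derivative[OF assms(1)])
  fix x y assume x: "x \<in> S" and y: "y \<in> S" and "x \<noteq> y"
  define da dc where "da = fst x - fst y" and "dc = snd y - snd x"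
  define A B where "A t = fst y + t * da" and "B t = (1 - snd y) + t * dc" for t
  have A: "(A has_real_derivative da) (at t)" and B: "(B has_real_derivative dc) (at t)" for t
    unfolding A_def B_def by (auto intro!: derivative_eq_intros)
  have segment: "hessian_pos_def (A t) (B t)" if "t \<in> {0..1}" for t
  proof -
    have "fst (t *\<^sub>R x + (1 - t) *\<^sub>R y) = A t" "1 - snd (t *\<^sub>R x + (1 - t) *\<^sub>R y) = B t"
      by (simp_all add: A_def B_def da_def dc_def algebra_simps)
    then show ?thesis
      using pos_def[OF convexD[OF assms(1) x y, of t "1 - t"]] that by simp
  qed
  have sig_segment: "sig (A t) (B t) = (\<lambda>(a, b). sigma2 k1 k2 a b) (t *\<^sub>R x + (1 - t) *\<^sub>R y)"
    if "t \<in> {0..1}" for t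
    using sigma2_eq_sig[of "A t" "(1 - t) * snd y + t * snd x"] segment[OF that]
    by (simp add: hessian_pos_def_def A_def B_def da_def dc_def case_prod_beta algebra_simps)
  have "da \<noteq> 0 \<or> dc \<noteq> 0" using \<open>x \<noteq> y\<close> by (auto simp: da_def dc_def prod_eq_iff)
  then have second_pos: "(H_aa (A t) (B t) * da^2 + 2 * H_ac (A t) (B t) * da * dc + H_cc (A t) (B t) * dc^2)
      / (B t - A t)^4 > 0" if "t \<in> {0..1}" for t
    using segment[OF that] unfolding hessian_pos_def_def
    by (intro divide_pos_pos quadratic_form_pos) auto
  show "\<exists>G G' G''. (\<forall>t\<in>{0..1}. G t = (\<lambda>(a, b). sigma2 k1 k2 a b) (t *\<^sub>R x + (1 - t) *\<^sub>R y))
      \<and> (\<forall>t\<in>{0..1}. (G has_real_derivative G' t) (at t))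
      \<and> (\<forall>t\<in>{0..1}. (G' has_real_derivative G'' t) (at t)) \<and> (\<forall>t\<in>{0..1}. G'' t > 0)"
    by (intro exI[of _ "\<lambda>t. sig (A t) (B t)"] exI[of _ "\<lambda>t. sig_dir (A t) (B t) da dc"]
        exI[of _ "\<lambda>t. (H_aa (A t) (B t) * da^2 + 2 * H_ac (A t) (B t) * da * dc
                        + H_cc (A t) (B t) * dc^2) / (B t - A t)^4"]
        conjI ballI sig_segment second_pos has_real_derivative_sig_along[OF A B])
       (use segment in \<open>auto simp: hessian_pos_def_def\<close>)
qed

lemma sigma2_strict_convex_near_center:
  "\<exists>e>0. strict_convex_on (ball (a0, 1 - c0) e) (\<lambda>(a, b). sigma2 k1 k2 a b)"
proof -
  obtain e where "e > 0" and "\<And>p. p \<in> ball (a0, 1 - c0) e \<Longrightarrow> hessian_pos_def (fst p) (1 - snd p)"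
    using eventually_hessian_pos_def_near_center by (auto simp: eventually_nhds_metric dist_commute)
  then show ?thesis
    using sigma2_strict_convex_on[OF convex_ball] by blast
qed

end

theorem mainTheorem7:
  fixes k1 k2 :: real
  assumes "k1 > 0" and "k2 > 0"
  shows "\<exists>e>0. strict_convex_on
           (ball (cdf k1 k2 (- k1), 1 - cdf k1 k2 k2) e)
           (\<lambda>(a, b). sigma2 k1 k2 a b)"
proof -
  interpret huber_density k1 k2 using assms by unfold_locales
  show ?thesis using sigma2_strict_convex_near_center by (simp add: a0_def c0_def)
qed

end
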